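(* Let $\lambda,\nu$ be partitions with $\nu$ obtained from $\lambda$ by adding one cell. Then \[ \lim_{q\to1}\alpha_{\nu/\lambda}(q,q)=\lim_{q\to1}\overline{\alpha}_{\nu/\lambda}(q,q)=\frac{H_\lambda}{H_\nu}, \] where $H_\kappa=\prod_{c\in\kappa}h_\kappa(c)$ is the product of hook-lengths.
   Context: Partitions are Young diagrams in French convention (cells $(x,y)\in\mathbb{Z}_{>0}^2$, $x\le\lambda_y$), $\lambda'$ the conjugate; for $c=(x,y)\in\lambda$, $a_\lambda(c)=\lambda_y-x$, $\ell_\lambda(c)=\lambda'_x-y$, $h_\lambda(c)=a_\lambda(c)+\ell_\lambda(c)+1$. For $\lambda\subseteq\nu$, $\mathcal{R}_{\nu/\lambda}$ (resp. $\mathcal{C}_{\nu/\lambda}$) is the set of cells of $\lambda$ in a row (resp. column) containing a cell of $\nu/\lambda$. With $[i,j]=1-q^it^j$: $\alpha_{\nu/\lambda}(q,t)=\prod_{c\in\mathcal{R}_{\nu/\lambda}}\frac{[a_\lambda(c),\ell_\lambda(c)+1]}{[a_\nu(c),\ell_\nu(c)+1]}\prod_{c\in\mathcal{C}_{\nu/\lambda}}\frac{[a_\lambda(c)+1,\ell_\lambda(c)]}{[a_\nu(c)+1,\ell_\nu(c)]}$, $\overline{\alpha}_{\nu/\lambda}(q,t)=\prod_{c\in\mathcal{R}_{\nu/\lambda}}\frac{[a_\lambda(c)+1,\ell_\lambda(c)]}{[a_\nu(c)+1,\ell_\nu(c)]}\prod_{c\in\mathcal{C}_{\nu/\lambda}}\frac{[a_\lambda(c),\ell_\lambda(c)+1]}{[a_\nu(c),\ell_\nu(c)+1]}$.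 *)

theory Defs
  imports Complex_Main
begin

text \<open>Partitions as weakly decreasing lists of positive naturals
  (lambda_1 >= lambda_2 >= ... > 0). Cells in French convention: (x,y) with
  x,y >= 1 and x <= lambda_y.\<close>

definition is_partition :: "nat list \<Rightarrow> bool" where
  "is_partition la \<longleftrightarrow> sorted_wrt (\<ge>) la \<and> 0 \<notin> set la"

definition prow :: "nat list \<Rightarrow> nat \<Rightarrow> nat" where
  "prow la y = (if 1 \<le> y \<and> y \<le> length la then la ! (y - 1) else 0)"

definition pcol :: "nat list \<Rightarrow> nat \<Rightarrow> nat" where
  "pcol la x = card {y. 1 \<le> y \<and> y \<le> length la \<and> x \<le> prow la y}"

definition cells :: "nat list \<Rightarrow> (nat \<times> nat) set" where
  "cells la = {(x, y). 1 \<le> x \<and> 1 \<le> y \<and> x \<le> prow la y}"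

definition arm :: "nat list \<Rightarrow> nat \<times> nat \<Rightarrow> nat" where
  "arm la c = prow la (snd c) - fst c"

definition leg :: "nat list \<Rightarrow> nat \<times> nat \<Rightarrow> nat" where
  "leg la c = pcol la (fst c) - snd c"

definition hook :: "nat list \<Rightarrow> nat \<times> nat \<Rightarrow> nat" where
  "hook la c = arm la c + leg la c + 1"

definition hook_prod :: "nat list \<Rightarrow> nat" where
  "hook_prod la = (\<Prod>c\<in>cells la. hook la c)"

definition brk :: "real \<Rightarrow> real \<Rightarrow> nat \<Rightarrow> nat \<Rightarrow> real" where
  "brk q t i j = 1 - q ^ i * t ^ j"

definition Rset :: "nat list \<Rightarrow> nat list \<Rightarrow> (nat \<times> nat) set" where
  "Rset la nu = {c \<in> cells la. \<exists>d \<in> cells nu - cells la. snd d = snd c}"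

definition Cset :: "nat list \<Rightarrow> nat list \<Rightarrow> (nat \<times> nat) set" where
  "Cset la nu = {c \<in> cells la. \<exists>d \<in> cells nu - cells la. fst d = fst c}"

definition alpha :: "nat list \<Rightarrow> nat list \<Rightarrow> real \<Rightarrow> real \<Rightarrow> real" where
  "alpha la nu q t =
     (\<Prod>c\<in>Rset la nu. brk q t (arm la c) (leg la c + 1) / brk q t (arm nu c) (leg nu c + 1)) *
     (\<Prod>c\<in>Cset la nu. brk q t (arm la c + 1) (leg la c) / brk q t (arm nu c + 1) (leg nu c))"

definition alphabar :: "nat list \<Rightarrow> nat list \<Rightarrow> real \<Rightarrow> real \<Rightarrow> real" where
  "alphabar la nu q t =
     (\<Prod>c\<in>Rset la nu. brk q t (arm la c + 1) (leg la c) / brk q t (arm nu c + 1) (leg nu c)) *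
     (\<Prod>c\<in>Cset la nu. brk q t (arm la c) (leg la c + 1) / brk q t (arm nu c) (leg nu c + 1))"

end

theory Submission
  imports Defs
begin

text \<open>At \<open>q = t\<close> every factor of \<open>\<alpha>\<close> and \<open>\<alpha>bar\<close> becomes \<open>(1 - q^h\<^sub>\<lambda>(c)) / (1 - q^h\<^sub>\<nu>(c))\<close>,
  which tends to \<open>h\<^sub>\<lambda>(c) / h\<^sub>\<nu>(c)\<close> as \<open>q \<rightarrow> 1\<close>. Adding a single cell \<open>d\<close> to \<open>\<lambda>\<close> changes
  only the hooks of the cells in the row and column of \<open>d\<close>, i.e. exactly those in
  \<open>R \<union> C\<close>, and the new cell has hook 1; hence the product of these ratios is
  \<open>H\<^sub>\<lambda> / H\<^sub>\<nu>\<close>.\<close>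

lemma tendsto_one_minus_power_quotient:
  assumes "b > 0"
  shows "((\<lambda>q::real. (1 - q ^ a) / (1 - q ^ b)) \<longlongrightarrow> real a / real b) (at 1)"
proof -
  let ?g = "\<lambda>q::real. (\<Sum>i<a. q ^ i) / (\<Sum>i<b. q ^ i)"
  have "isCont ?g 1"
    using assms by (intro continuous_intros) auto
  then have "(?g \<longlongrightarrow> real a / real b) (at 1)"
    by (simp add: isCont_def)
  moreover have "eventually (\<lambda>q. ?g q = (1 - q ^ a) / (1 - q ^ b)) (at (1::real))"
    unfolding eventually_at_filter
    by (intro always_eventually allI impI)
       (simp add: one_diff_power_eq[of _ a] one_diff_power_eq[of _ b])
  ultimately show ?thesis
    by (simp add: tendsto_cong)
qed

lemma tendsto_prod_hook_quotients:
  "((\<lambda>q::real. \<Prod>c\<in>A. (1 - q ^ hook la c) / (1 - q ^ hook nu c))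
      \<longlongrightarrow> (\<Prod>c\<in>A. real (hook la c) / real (hook nu c))) (at 1)"
  by (intro tendsto_prod tendsto_one_minus_power_quotient) (simp add: hook_def)

lemma brk_diag: "brk q q i j = 1 - q ^ (i + j)"
  unfolding brk_def by (simp add: power_add)

lemma alpha_diag:
  "alpha la nu q q =
     (\<Prod>c\<in>Rset la nu. (1 - q ^ hook la c) / (1 - q ^ hook nu c)) *
     (\<Prod>c\<in>Cset la nu. (1 - q ^ hook la c) / (1 - q ^ hook nu c))"
  unfolding alpha_def hook_def by (simp add: brk_diag)

lemma alphabar_diag:
  "alphabar la nu q q =
     (\<Prod>c\<in>Rset la nu. (1 - q ^ hook la c) / (1 - q ^ hook nu c)) *
     (\<Prod>c\<in>Cset la nu. (1 - q ^ hook la c) / (1 - q ^ hook nu c))"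
  unfolding alphabar_def hook_def by (simp add: brk_diag)

lemma prow_antimono:
  assumes "is_partition la" "1 \<le> y" "y \<le> y'"
  shows "prow la y' \<le> prow la y"
proof (cases "y' \<le> length la \<and> y \<noteq> y'")
  case True
  then have "la ! (y' - 1) \<le> la ! (y - 1)"
    using assms sorted_wrt_nth_less[of "(\<ge>)" la "y - 1" "y' - 1"]
    unfolding is_partition_def by auto
  then show ?thesis
    using True assms unfolding prow_def by auto
qed (auto simp: prow_def)

lemma finite_cells: "finite (cells la)"
proof (rule finite_subset)
  show "cells la \<subseteq> {0..sum_list la} \<times> {0..length la}"
  proof
    fix c assume "c \<in> cells la"
    then obtain x y where c: "c = (x, y)" "1 \<le> x" "1 \<le> y" "x \<le> prow la y"
      unfolding cells_def by auto
    then have y: "y \<le> length la" "x \<le> la ! (y - 1)"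
      unfolding prow_def by (auto split: if_splits)
    then have "la ! (y - 1) \<le> sum_list la"
      using c(3) by (intro member_le_sum_list) auto
    then show "c \<in> {0..sum_list la} \<times> {0..length la}"
      using c y by auto
  qed
qed simp

lemma prow_eq_card_row: "prow la y = card {x. (x, y) \<in> cells la}"
proof (cases "y = 0")
  case False
  then have "{x. (x, y) \<in> cells la} = {1..prow la y}"
    unfolding cells_def by auto
  then show ?thesis
    by simp
qed (simp add: prow_def cells_def)

lemma pcol_eq_card_column:
  assumes "1 \<le> x"
  shows "pcol la x = card {y. (x, y) \<in> cells la}"
proof -
  have "{y. 1 \<le> y \<and> y \<le> length la \<and> x \<le> prow la y} = {y. (x, y) \<in> cells la}"
    using assms unfolding cells_def prow_def by (auto split: if_splits)
  then show ?thesis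
    unfolding pcol_def by simp
qed

lemma arm_eq_if_same_row:
  assumes "\<And>x. (x, snd c) \<in> cells la \<longleftrightarrow> (x, snd c) \<in> cells nu"
  shows "arm la c = arm nu c"
  unfolding arm_def prow_eq_card_row using assms by simp

lemma leg_eq_if_same_column:
  assumes "1 \<le> fst c" "\<And>y. (fst c, y) \<in> cells la \<longleftrightarrow> (fst c, y) \<in> cells nu"
  shows "leg la c = leg nu c"
  unfolding leg_def pcol_eq_card_column[OF assms(1)] using assms(2) by simp

lemma hook_eq_off_row_and_column:
  assumes "cells nu = insert d (cells la)" "c \<in> cells la"
    and "snd c \<noteq> snd d" "fst c \<noteq> fst d"
  shows "hook nu c = hook la c"
proof -
  have "1 \<le> fst c"
    using assms(2) unfolding cells_def by auto
  moreover have "(x, snd c) \<in> cells la \<longleftrightarrow> (x, snd c) \<in> cells nu" for x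
    using assms(1,3) by auto
  moreover have "(fst c, y) \<in> cells la \<longleftrightarrow> (fst c, y) \<in> cells nu" for y
    using assms(1,4) by auto
  ultimately show ?thesis
    unfolding hook_def using arm_eq_if_same_row leg_eq_if_same_column by metis
qed

lemma arm_added_cell:
  assumes "cells nu = insert d (cells la)" "d \<notin> cells la"
  shows "arm nu d = 0"
proof (rule ccontr)
  obtain x0 y0 where d: "d = (x0, y0)" by fastforce
  have x0: "1 \<le> x0" and y0: "1 \<le> y0"
    using assms(1) d unfolding cells_def by auto
  assume "arm nu d \<noteq> 0"
  then have longer: "x0 < prow nu y0"
    unfolding arm_def d by simp
  then have "(prow nu y0, y0) \<in> cells nu - {d}"
    using x0 y0 d unfolding cells_def by auto
  then have "(prow nu y0, y0) \<in> cells la"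
    using assms(1) by blast
  then have "d \<in> cells la"
    using longer x0 d unfolding cells_def by auto
  then show False
    using assms(2) by simp
qed

lemma leg_added_cell:
  assumes "is_partition la" "cells nu = insert d (cells la)" "d \<notin> cells la"
  shows "leg nu d = 0"
proof -
  obtain x0 y0 where d: "d = (x0, y0)" by fastforce
  have x0: "1 \<le> x0" and y0: "1 \<le> y0"
    using assms(2) d unfolding cells_def by auto
  have "{y. (x0, y) \<in> cells nu} \<subseteq> {1..y0}"
  proof
    fix y assume y: "y \<in> {y. (x0, y) \<in> cells nu}"
    have "1 \<le> y"
      using y unfolding cells_def by auto
    moreover have "\<not> y0 < y"
    proof
      assume "y0 < y"
      then have "(x0, y) \<in> cells la"
        using y assms(2) d by auto
      then have "x0 \<le> prow la y"
        unfolding cells_def by auto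
      also have "\<dots> \<le> prow la y0"
        using prow_antimono[OF assms(1) y0] \<open>y0 < y\<close> by simp
      finally have "d \<in> cells la"
        using d x0 y0 unfolding cells_def by auto
      then show False
        using assms(3) by simp
    qed
    ultimately show "y \<in> {1..y0}"
      by simp
  qed
  then have "card {y. (x0, y) \<in> cells nu} \<le> y0"
    using card_mono[of "{1..y0}"] by fastforce
  then show ?thesis
    unfolding leg_def d fst_conv snd_conv pcol_eq_card_column[OF x0] by simp
qed

lemma hook_prod_quotient_add_cell:
  assumes "is_partition la" "cells la \<subseteq> cells nu" "cells nu - cells la = {d}"
  shows "real (hook_prod la) / real (hook_prod nu) =
    (\<Prod>c\<in>Rset la nu. real (hook la c) / real (hook nu c)) *
    (\<Prod>c\<in>Cset la nu. real (hook la c) / real (hook nu c))"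
proof -
  define f where "f c = real (hook la c) / real (hook nu c)" for c
  have nu: "cells nu = insert d (cells la)" and d: "d \<notin> cells la"
    using assms(2,3) by auto
  have R: "Rset la nu = {c \<in> cells la. snd c = snd d}"
    and C: "Cset la nu = {c \<in> cells la. fst c = fst d}"
    unfolding Rset_def Cset_def assms(3) by auto
  have "hook nu d = 1"
    using arm_added_cell[OF nu d] leg_added_cell[OF assms(1) nu d]
    unfolding hook_def by simp
  then have "real (hook_prod la) / real (hook_prod nu) = (\<Prod>c\<in>cells la. f c)"
    unfolding hook_prod_def nu f_def using finite_cells d by (simp add: prod_dividef)
  also have "\<dots> = (\<Prod>c\<in>Rset la nu \<union> Cset la nu. f c)"
  proof (rule prod.mono_neutral_right[OF finite_cells])
    show "\<forall>c\<in>cells la - (Rset la nu \<union> Cset la nu). f c = 1"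
      using hook_eq_off_row_and_column[OF nu] unfolding R C f_def
      by (auto simp: hook_def)
  qed (auto simp: R C)
  also have "\<dots> = (\<Prod>c\<in>Rset la nu. f c) * (\<Prod>c\<in>Cset la nu. f c)"
    using d finite_cells[of la] by (intro prod.union_disjoint) (auto simp: R C)
  finally show ?thesis
    unfolding f_def .
qed

theorem lemma4p8:
  fixes la nu :: "nat list"
  assumes "is_partition la" and "is_partition nu"
    and "cells la \<subseteq> cells nu" and "card (cells nu - cells la) = 1"
  shows "((\<lambda>q. alpha la nu q q) \<longlongrightarrow> real (hook_prod la) / real (hook_prod nu)) (at (1::real))
     \<and> ((\<lambda>q. alphabar la nu q q) \<longlongrightarrow> real (hook_prod la) / real (hook_prod nu)) (at (1::real))"
proof -
  obtain d where "cells nu - cells la = {d}"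
    using assms(4) by (auto simp: card_1_singleton_iff)
  then have quotient: "real (hook_prod la) / real (hook_prod nu) =
      (\<Prod>c\<in>Rset la nu. real (hook la c) / real (hook nu c)) *
      (\<Prod>c\<in>Cset la nu. real (hook la c) / real (hook nu c))"
    by (rule hook_prod_quotient_add_cell[OF assms(1,3)])
  have "((\<lambda>q. alpha la nu q q) \<longlongrightarrow> real (hook_prod la) / real (hook_prod nu)) (at (1::real))"
    unfolding alpha_diag quotient by (intro tendsto_mult tendsto_prod_hook_quotients)
  moreover have "alphabar la nu q q = alpha la nu q q" for q
    unfolding alpha_diag alphabar_diag ..
  ultimately show ?thesis
    by simp
qed

end
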